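(* Let $(k,\alpha)\in\Upsilon$, $w\in\operatorname{lext}(L_{k,\alpha})$, $\bar w\in\operatorname{lext}(w,L_{k,\alpha})$, let $x\in\Sigma_k$ be a letter that is a recurrent factor of $\bar w$, and let $t$ be a left infinite $\alpha$-power free word over $\Sigma_k$ with $\operatorname{occur}(t,x)=0$. Then there are finite words $w_1,w_2,g\in\Sigma_k^*$ such that $(w_1^R,w_2^R,x,g^R,t^R)\in\Gamma(k,\alpha)$, $w$ is a suffix of $gxw_2w_1$, and the left infinite word $txw_2w_1$ is $\alpha$-power free.
   Context: $\Sigma_k$ is an alphabet with $k$ letters. For a nonempty finite word $r$ and a rational $\beta\ge 1$ with $\beta|r|$ an integer, the $\beta$-power $r^\beta$ is the word $rr\cdots rt$ of length $\beta|r|$, where $t$ is a prefix of $r$. For rational $\alpha\ge1$, a word is $\alpha$-power free if it has no factor that is a $\beta$-power with $\beta\ge\alpha$, and $\alpha^+$-power free if it has no factor that is a $\beta$-power with $\beta>\alpha$; "$\alpha$" may denote a rational number or a symbol $\alpha^+$. $L_{k,\alpha}$ is the set of finite $\alpha$-power free words over $\Sigma_k$; an infinite word is $\alpha$-power free iff all its finite factors lie in $L_{k,\alpha}$; $L^{\mathbb N,R}_{k,\alpha}$ is the set of right infinite $\alpha$-power free words. $\Upsilon$ is the set of pairs: $(k,\alpha)$ with $k=3$ and rational $\alpha>2$; $(k,\alpha)$ with $k>3$ and rational $\alpha\ge2$; $(k,\alpha^+)$ with $k\ge3$ and rational $\alpha\ge2$. $\operatorname{occur}(w,s)$ is the number of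 occurrences of a nonempty word $s$ as a factor of $w$; $s$ is recurrent in an infinite word $w$ if $\operatorname{occur}(w,s)=\infty$. A word $w\in L$ is left extendable in $L$ if for every $n$ there is $u\in L$ with $|u|=n$ and $uw\in L$; $\operatorname{lext}(L)$ is the set of such words, and for $w\in\operatorname{lext}(L)$, $\operatorname{lext}(w,L)$ is the set of left infinite words all of whose finite suffixes lie in $L$ and which have $w$ as a suffix. The reversal $w^R$: if $w=w_1\cdots w_m$ then $w^R=w_m\cdots w_1$; if $w=\cdots w_2w_1$ is left infinite then $w^R=w_1w_2\cdots$ is right infinite (and conversely). For $(k,\alpha)\in\Upsilon$, $(w_1,w_2,x,g,t)\in\Gamma(k,\alpha)$ means: $w_1,w_2,g\in\Sigma_k^*$; $x\in\Sigma_k$; $w_1w_2xg\in L_{k,\alpha}$; $t\in L^{\mathbb N,R}_{k,\alpha}$; $\operatorname{occur}(t,x)=0$; $g$ is a prefix of $t$; $\operatorname{occur}(w_2xgy,xgy)=1$, where $y\in\Sigma_k$ is the letter with $gy$ a prefix of $t$; and $\operatorname{occur}(w_2,x)\ge\operatorname{occur}(w_1,x)$. *)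

theory Defs
  imports Complex_Main "HOL-Library.Sublist"
begin

text \<open>The alphabet \<open>\<Sigma>_k\<close> is \<open>{0..<k}\<close> (letters are naturals); finite words are lists.
  A right infinite word \<open>t = t_0 t_1 t_2 \<dots>\<close> is a function \<open>nat \<Rightarrow> nat\<close>.
  A left infinite word \<open>w = \<dots> w_2 w_1 w_0\<close> is also a function \<open>nat \<Rightarrow> nat\<close>, where
  \<open>w i\<close> is the letter at distance \<open>i\<close> from the right end.
  The exponent \<open>\<alpha>\<close> is a rational together with a flag \<open>pl\<close>; \<open>pl = True\<close> means
  the symbol \<open>\<alpha>\<^sup>+\<close>.\<close>

definition word_over :: "nat \<Rightarrow> nat list \<Rightarrow> bool" where
  "word_over k w \<longleftrightarrow> set w \<subseteq> {..<k}"

definition exceeds :: "rat \<Rightarrow> bool \<Rightarrow> rat \<Rightarrow> bool" where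
  "exceeds \<alpha> pl \<beta> \<longleftrightarrow> (if pl then \<beta> > \<alpha> else \<beta> \<ge> \<alpha>)"

definition is_power :: "nat list \<Rightarrow> rat \<Rightarrow> bool" where
  "is_power u \<beta> \<longleftrightarrow> (\<exists>p. 0 < p \<and> p \<le> length u \<and>
      (\<forall>i. i + p < length u \<longrightarrow> u ! i = u ! (i + p)) \<and>
      \<beta> = of_nat (length u) / of_nat p)"

definition power_free :: "rat \<Rightarrow> bool \<Rightarrow> nat list \<Rightarrow> bool" where
  "power_free \<alpha> pl w \<longleftrightarrow>
     \<not> (\<exists>u \<beta>. sublist u w \<and> is_power u \<beta> \<and> exceeds \<alpha> pl \<beta>)"

definition Lang :: "nat \<Rightarrow> rat \<Rightarrow> bool \<Rightarrow> nat list set" where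
  "Lang k \<alpha> pl = {w. word_over k w \<and> power_free \<alpha> pl w}"

definition Upsilon :: "nat \<Rightarrow> rat \<Rightarrow> bool \<Rightarrow> bool" where
  "Upsilon k \<alpha> pl \<longleftrightarrow>
     (\<not> pl \<and> k = 3 \<and> \<alpha> > 2) \<or> (\<not> pl \<and> k > 3 \<and> \<alpha> \<ge> 2) \<or> (pl \<and> k \<ge> 3 \<and> \<alpha> \<ge> 2)"

definition rfactor :: "(nat \<Rightarrow> nat) \<Rightarrow> nat \<Rightarrow> nat \<Rightarrow> nat list" where
  "rfactor t i n = map t [i..<i+n]"

definition lfactor :: "(nat \<Rightarrow> nat) \<Rightarrow> nat \<Rightarrow> nat \<Rightarrow> nat list" where
  "lfactor w i n = rev (map w [i..<i+n])"

definition rinf_pf :: "nat \<Rightarrow> rat \<Rightarrow> bool \<Rightarrow> (nat \<Rightarrow> nat) \<Rightarrow> bool" where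
  "rinf_pf k \<alpha> pl t \<longleftrightarrow> (\<forall>i n. rfactor t i n \<in> Lang k \<alpha> pl)"

definition linf_pf :: "nat \<Rightarrow> rat \<Rightarrow> bool \<Rightarrow> (nat \<Rightarrow> nat) \<Rightarrow> bool" where
  "linf_pf k \<alpha> pl w \<longleftrightarrow> (\<forall>i n. lfactor w i n \<in> Lang k \<alpha> pl)"

text \<open>Reversal of a left infinite word \<open>\<dots>w_2 w_1\<close> is \<open>w_1 w_2 \<dots>\<close>; with our
  encodings this is the identity on the underlying function.\<close>
definition lrev :: "(nat \<Rightarrow> nat) \<Rightarrow> (nat \<Rightarrow> nat)" where
  "lrev w = (\<lambda>i. w i)"

definition lconc :: "(nat \<Rightarrow> nat) \<Rightarrow> nat list \<Rightarrow> (nat \<Rightarrow> nat)" where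
  "lconc w u = (\<lambda>i. if i < length u then rev u ! i else w (i - length u))"

definition occur :: "nat list \<Rightarrow> nat list \<Rightarrow> nat" where
  "occur w s = card {i. i + length s \<le> length w \<and> take (length s) (drop i w) = s}"

definition occ_pos_R :: "(nat \<Rightarrow> nat) \<Rightarrow> nat list \<Rightarrow> nat set" where
  "occ_pos_R t s = {i. rfactor t i (length s) = s}"

definition occ_pos_L :: "(nat \<Rightarrow> nat) \<Rightarrow> nat list \<Rightarrow> nat set" where
  "occ_pos_L w s = {i. lfactor w i (length s) = s}"

definition lext :: "nat list set \<Rightarrow> nat list set" where
  "lext L = {w. w \<in> L \<and> (\<forall>n. \<exists>u. u \<in> L \<and> length u = n \<and> u @ w \<in> L)}"

definition lext_w :: "nat list \<Rightarrow> nat list set \<Rightarrow> (nat \<Rightarrow> nat) set" where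
  "lext_w w L = {v. (\<forall>n. lfactor v 0 n \<in> L) \<and> lfactor v 0 (length w) = w}"

definition Gamma :: "nat \<Rightarrow> rat \<Rightarrow> bool \<Rightarrow>
    (nat list \<times> nat list \<times> nat \<times> nat list \<times> (nat \<Rightarrow> nat)) set" where
  "Gamma k \<alpha> pl = {(w1, w2, x, g, t).
     word_over k w1 \<and> word_over k w2 \<and> word_over k g \<and> x < k \<and>
     w1 @ w2 @ [x] @ g \<in> Lang k \<alpha> pl \<and>
     rinf_pf k \<alpha> pl t \<and>
     occ_pos_R t [x] = {} \<and>
     rfactor t 0 (length g) = g \<and>
     (let y = t (length g) in occur (w2 @ [x] @ g @ [y]) ([x] @ g @ [y]) = 1) \<and>
     occur w2 [x] \<ge> occur w1 [x]}"

end

theory Submission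
  imports Defs "HOL-Library.Infinite_Set"
begin

text \<open>Since \<open>x\<close> recurs in \<open>wbar\<close>
  and \<open>t\<close> avoids \<open>x\<close>, one finds an occurrence of \<open>x\<close> at a position \<open>m\<close> of \<open>wbar\<close>, followed
  (to its left) by a prefix \<open>g\<close> of \<open>t\<close>, such that with \<open>y\<close> the next letter of \<open>t\<close> the factor
  \<open>x g y\<close> does not occur in \<open>w\<^sub>2 = wbar[n, m)\<close>, while \<open>w\<^sub>1 = wbar[0, n)\<close> has no more \<open>x\<close>'s than
  \<open>w\<^sub>2\<close>.  If some prefix of \<open>t\<close> follows only finitely many \<open>x\<close>'s, \<open>g\<close> is the longest one following
  infinitely many and \<open>n\<close> bounds the occurrences of the next longer one; otherwise \<open>n = 0\<close>
  and \<open>g\<close> is as long as possible below a fixed deep occurrence.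

  A forbidden power inside \<open>wbar[0, m + |g|]\<close> or inside \<open>t\<close> is
  impossible.  One straddling the seam cannot reach a copy of the last \<open>x\<close>, so its period \<open>p\<close>
  exceeds its overhang and places a copy of \<open>x g y\<close> at \<open>m - p\<close>; hence \<open>m - p < n\<close>.  Shifting by
  \<open>p\<close> injects the \<open>x\<close>'s in \<open>[m - p, m)\<close> into the other \<open>x\<close>'s up to \<open>m\<close>, so \<open>w\<^sub>1\<close> would contain
  more \<open>x\<close>'s than \<open>w\<^sub>2\<close>.\<close>

lemma is_power_rev:
  assumes "is_power u \<beta>"
  shows "is_power (rev u) \<beta>"
proof -
  obtain p where p: "0 < p" "p \<le> length u" "\<beta> = of_nat (length u) / of_nat p"
    and per: "\<And>i. i + p < length u \<Longrightarrow> u ! i = u ! (i + p)"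
    using assms unfolding is_power_def by blast
  have "rev u ! i = rev u ! (i + p)" if "i + p < length u" for i
  proof -
    have "length u - Suc (i + p) + p = length u - Suc i" using that by simp
    then show ?thesis using per[of "length u - Suc (i + p)"] that by (simp add: rev_nth)
  qed
  then show ?thesis using p unfolding is_power_def by auto
qed

lemma power_free_rev [simp]: "power_free \<alpha> pl (rev w) \<longleftrightarrow> power_free \<alpha> pl w"
  unfolding power_free_def by (metis is_power_rev rev_rev_ident sublist_rev)

lemma rev_in_Lang_iff [simp]: "rev w \<in> Lang k \<alpha> pl \<longleftrightarrow> w \<in> Lang k \<alpha> pl"
  by (simp add: Lang_def word_over_def)

lemma upt_split: "a \<le> b \<Longrightarrow> b \<le> c \<Longrightarrow> [a..<c] = [a..<b] @ [b..<c]"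
  using upt_add_eq_append[of a b "c - b"] by simp

lemma lfactor_in_Lang_iff: "lfactor w i n \<in> Lang k \<alpha> pl \<longleftrightarrow> map w [i..<i+n] \<in> Lang k \<alpha> pl"
  by (simp add: lfactor_def)

lemma linf_pf_iff: "linf_pf k \<alpha> pl w \<longleftrightarrow> (\<forall>i n. map w [i..<i+n] \<in> Lang k \<alpha> pl)"
  by (simp add: linf_pf_def lfactor_in_Lang_iff)

lemma letter_bound_if_Lang:
  assumes "map w [i..<j] \<in> Lang k \<alpha> pl" "i \<le> q" "q < j"
  shows "w q < k"
  using assms by (auto simp: Lang_def word_over_def image_subset_iff)

lemma ge_two_if_exceeds:
  assumes "Upsilon k \<alpha> pl" "exceeds \<alpha> pl \<beta>"
  shows "2 \<le> \<beta>"
  using assms by (auto simp: Upsilon_def exceeds_def split: if_splits)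

definition forbidden_power_at :: "rat \<Rightarrow> bool \<Rightarrow> (nat \<Rightarrow> nat) \<Rightarrow> nat \<Rightarrow> nat \<Rightarrow> nat \<Rightarrow> bool" where
  "forbidden_power_at \<alpha> pl F b L p \<longleftrightarrow> 0 < p \<and> p \<le> L \<and>
     (\<forall>j. j + p < L \<longrightarrow> F (b + j) = F (b + j + p)) \<and> exceeds \<alpha> pl (of_nat L / of_nat p)"

lemma power_free_map_upt_iff:
  "power_free \<alpha> pl (map F [i..<i+n]) \<longleftrightarrow>
     (\<forall>b L p. i \<le> b \<longrightarrow> b + L \<le> i + n \<longrightarrow> \<not> forbidden_power_at \<alpha> pl F b L p)"
proof
  assume pf: "power_free \<alpha> pl (map F [i..<i+n])"
  show "\<forall>b L p. i \<le> b \<longrightarrow> b + L \<le> i + n \<longrightarrow> \<not> forbidden_power_at \<alpha> pl F b L p"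
  proof (intro allI impI notI)
    fix b L p assume b: "i \<le> b" "b + L \<le> i + n" and P: "forbidden_power_at \<alpha> pl F b L p"
    have "map F [i..<i+n] = map F [i..<b] @ map F [b..<b+L] @ map F [b+L..<i+n]"
      using b upt_split[of i b "i + n"] upt_split[of b "b + L" "i + n"] by simp
    then have "sublist (map F [b..<b+L]) (map F [i..<i+n])"
      by (metis sublist_appendI)
    moreover have "is_power (map F [b..<b+L]) (of_nat L / of_nat p)"
      using P unfolding forbidden_power_at_def is_power_def by (auto simp: add.assoc)
    ultimately show False
      using pf P unfolding power_free_def forbidden_power_at_def by blast
  qed
next
  assume no: "\<forall>b L p. i \<le> b \<longrightarrow> b + L \<le> i + n \<longrightarrow> \<not> forbidden_power_at \<alpha> pl F b L p"
  show "power_free \<alpha> pl (map F [i..<i+n])"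
    unfolding power_free_def
  proof (intro notI, elim exE conjE)
    fix u \<beta> assume "sublist u (map F [i..<i+n])" "is_power u \<beta>" "exceeds \<alpha> pl \<beta>"
    then obtain ps ss p where s: "map F [i..<i+n] = ps @ u @ ss" and "0 < p" "p \<le> length u"
      and per: "\<And>j. j + p < length u \<Longrightarrow> u ! j = u ! (j + p)"
      and "exceeds \<alpha> pl (of_nat (length u) / of_nat p)"
      unfolding sublist_def is_power_def by blast
    moreover have len: "length ps + length u + length ss = n" using arg_cong[OF s, of length] by simp
    moreover have "u ! j = F (i + length ps + j)" if "j < length u" for j
      using arg_cong[OF s, of "\<lambda>v. v ! (length ps + j)"] that len by (simp add: nth_append add.assoc)
    ultimately have "forbidden_power_at \<alpha> pl F (i + length ps) (length u) p"
      unfolding forbidden_power_at_def by (auto simp: add.assoc)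
    then show False using no len by fastforce
  qed
qed

lemma double_period_le_length:
  assumes "Upsilon k \<alpha> pl" "forbidden_power_at \<alpha> pl F b L p"
  shows "2 * p \<le> L"
proof -
  have "(2::rat) \<le> of_nat L / of_nat p" and "0 < p"
    using assms ge_two_if_exceeds unfolding forbidden_power_at_def by blast+
  then have "of_nat (2 * p) \<le> (of_nat L :: rat)" by (simp add: field_simps)
  then show ?thesis by linarith
qed

lemma no_forbidden_power_in_window:
  assumes "power_free \<alpha> pl (map F [i..<i+n])" "i \<le> b" "b + L \<le> i + n"
  shows "\<not> forbidden_power_at \<alpha> pl F b L p"
  using assms power_free_map_upt_iff by blast

lemma forbidden_power_at_cong:
  assumes "\<And>j. j < L \<Longrightarrow> F (b + j) = G (c + j)"
  shows "forbidden_power_at \<alpha> pl F b L p \<longleftrightarrow> forbidden_power_at \<alpha> pl G c L p"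
  using assms unfolding forbidden_power_at_def by (auto simp: add.assoc)

section \<open>Powers across a seam\<close>

text \<open>Within the period window, shifting an occurrence of \<open>x\<close> in \<open>[m - p, m)\<close> by \<open>p\<close>
  (to the left from \<open>b + p\<close> on, to the right before) lands on an occurrence of \<open>x\<close> outside
  that interval, injectively; and no occurrence lies beyond \<open>m\<close>.\<close>
lemma card_letter_occurrences_in_period:
  fixes F :: "nat \<Rightarrow> 'a"
  assumes per: "\<And>q. b \<le> q \<Longrightarrow> q + p < b + L \<Longrightarrow> F q = F (q + p)"
    and "2 * p \<le> L" "b + p \<le> m" "m < b + L"
    and beyond: "\<And>q. m < q \<Longrightarrow> F q \<noteq> x"
  shows "2 * card {q. m - p \<le> q \<and> q < m \<and> F q = x} \<le> card {q. q \<le> m \<and> F q = x}"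
proof -
  define S where "S = {q. m - p \<le> q \<and> q < m \<and> F q = x}"
  define X where "X = {q. q \<le> m \<and> F q = x}"
  define shift where "shift q = (if b + p \<le> q then q - p else q + p)" for q
  have "F (shift q) = x" if "q \<in> S" for q
    using that per[of "q - p"] per[of q] assms(2-4) by (auto simp: S_def shift_def)
  then have "shift ` S \<subseteq> X"
    unfolding X_def using beyond le_less_linear by blast
  moreover have "S \<subseteq> X" "S \<inter> shift ` S = {}" "inj_on shift S"
    using assms(3) by (auto simp: S_def X_def shift_def inj_on_def)
  moreover have "finite X" "finite S" by (auto simp: S_def X_def)
  ultimately have "card S + card (shift ` S) \<le> card X"
    by (metis card_Un_disjoint card_mono finite_imageI le_sup_iff)
  moreover have "card (shift ` S) = card S" using \<open>inj_on shift S\<close> by (rule card_image)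
  ultimately show ?thesis unfolding S_def X_def by simp
qed

lemma no_forbidden_power_across_cut:
  assumes U: "Upsilon k \<alpha> pl"
    and left: "\<And>b L p. b + L \<le> m + h + 1 \<Longrightarrow> \<not> forbidden_power_at \<alpha> pl F b L p"
    and right: "\<And>b L p. m < b \<Longrightarrow> \<not> forbidden_power_at \<alpha> pl F b L p"
    and Fm: "F m = x" and beyond: "\<And>q. m < q \<Longrightarrow> F q \<noteq> x"
    and unique: "\<And>q. n \<le> q \<Longrightarrow> q < m \<Longrightarrow> F q = x \<Longrightarrow> \<exists>j\<le>h. F (q + 1 + j) \<noteq> F (m + 1 + j)"
    and count: "card {q. q < n \<and> F q = x} \<le> card {q. n \<le> q \<and> q < m \<and> F q = x}"
    and "n \<le> m"
  shows "\<not> forbidden_power_at \<alpha> pl F b L p"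
proof
  assume P: "forbidden_power_at \<alpha> pl F b L p"
  have per: "F q = F (q + p)" if "b \<le> q" "q + p < b + L" for q
  proof -
    have "\<forall>j. j + p < L \<longrightarrow> F (b + j) = F (b + j + p)" using P by (simp add: forbidden_power_at_def)
    from this[rule_format, of "q - b"] that show ?thesis by simp
  qed
  have "2 * p \<le> L" "0 < p" using double_period_le_length[OF U P] P by (auto simp: forbidden_power_at_def)
  have across: "m + h + 1 < b + L" "b \<le> m"
    using left[of b L p] right[of b L p] P by linarith+
  have "b + L \<le> m + p"
  proof (rule ccontr)
    assume "\<not> b + L \<le> m + p"
    then show False using per[of m] Fm beyond[of "m + p"] \<open>b \<le> m\<close> \<open>0 < p\<close> by simp
  qed
  with \<open>2 * p \<le> L\<close> have "b + p \<le> m" by linarith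
  define q0 where "q0 = m - p"
  have "q0 + p = m" "b \<le> q0" using \<open>b + p \<le> m\<close> by (simp_all add: q0_def)
  have "F q0 = x" using per[of q0] Fm across \<open>q0 + p = m\<close> \<open>b \<le> q0\<close> by simp
  have "F (q0 + 1 + j) = F (m + 1 + j)" if "j \<le> h" for j
    using per[of "q0 + 1 + j"] that across \<open>q0 + p = m\<close> \<open>b \<le> q0\<close> by (simp add: add.commute add.left_commute)
  then have "q0 < n"
    using unique[of q0] \<open>F q0 = x\<close> \<open>q0 + p = m\<close> \<open>0 < p\<close> not_le by fastforce
  define C1 where "C1 = {q. q < n \<and> F q = x}"
  define C2 where "C2 = {q. n \<le> q \<and> q < m \<and> F q = x}"
  have "finite C1" "finite C2" by (simp_all add: C1_def C2_def)
  have "{q. q \<le> m \<and> F q = x} = C1 \<union> C2 \<union> {m}" "C1 \<inter> C2 = {}" "m \<notin> C1 \<union> C2"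
    using Fm \<open>n \<le> m\<close> by (auto simp: C1_def C2_def)
  then have total: "card {q. q \<le> m \<and> F q = x} = card C1 + card C2 + 1"
    using \<open>finite C1\<close> \<open>finite C2\<close> by (simp add: card_Un_disjoint)
  have "insert q0 C2 \<subseteq> {q. m - p \<le> q \<and> q < m \<and> F q = x}" "q0 \<notin> C2"
    using \<open>F q0 = x\<close> \<open>q0 < n\<close> \<open>n \<le> m\<close> by (auto simp: C2_def q0_def)
  then have last_period: "card C2 + 1 \<le> card {q. m - p \<le> q \<and> q < m \<and> F q = x}"
    using \<open>finite C2\<close> card_mono[of "{q. m - p \<le> q \<and> q < m \<and> F q = x}" "insert q0 C2"] by simp
  have "2 * card {q. m - p \<le> q \<and> q < m \<and> F q = x} \<le> card {q. q \<le> m \<and> F q = x}"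
    using card_letter_occurrences_in_period[of b p L F m x, OF per] \<open>2 * p \<le> L\<close> \<open>b + p \<le> m\<close>
      across beyond by simp
  with total last_period count show False unfolding C1_def C2_def by linarith
qed

lemma occur_map_upt:
  "occur (map F [a..<c]) s = card {i. i + length s \<le> c - a \<and> map F [a+i..<a+i+length s] = s}"
proof -
  have "take (length s) (drop i (map F [a..<c])) = map F [a+i..<a+i+length s]"
    if "i + length s \<le> c - a" for i
    using that by (cases "a \<le> c") (auto simp: take_map drop_map take_upt)
  then show ?thesis unfolding occur_def by (metis (lifting) length_map length_upt)
qed

lemma occur_map_upt_letter: "occur (map F [a..<c]) [x] = card {q. a \<le> q \<and> q < c \<and> F q = x}"
proof -
  have "{q. a \<le> q \<and> q < c \<and> F q = x} = (\<lambda>i. a + i) ` {i. i + 1 \<le> c - a \<and> map F [a+i..<a+i+1] = [x]}"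
  proof (intro set_eqI iffI)
    fix q assume "q \<in> {q. a \<le> q \<and> q < c \<and> F q = x}"
    then show "q \<in> (\<lambda>i. a + i) ` {i. i + 1 \<le> c - a \<and> map F [a+i..<a+i+1] = [x]}"
      by (intro image_eqI[of _ _ "q - a"]) auto
  qed auto
  then show ?thesis unfolding occur_map_upt by (simp add: card_image)
qed

lemma occur_map_upt_suffix_once:
  assumes "a \<le> m" "m \<le> c"
    and earlier: "\<And>q. a \<le> q \<Longrightarrow> q < m \<Longrightarrow> \<exists>j<c - m. F (q + j) \<noteq> F (m + j)"
  shows "occur (map F [a..<c]) (map F [m..<c]) = 1"
proof -
  have match: "map F [a+i..<a+i+(c-m)] = map F [m..<c] \<longleftrightarrow> (\<forall>j<c-m. F (a + i + j) = F (m + j))"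
    for i by (auto simp: list_eq_iff_nth_eq)
  have "{i. i + (c - m) \<le> c - a \<and> map F [a+i..<a+i+(c-m)] = map F [m..<c]} = {m - a}"
  proof (intro set_eqI iffI)
    fix i assume "i \<in> {i. i + (c - m) \<le> c - a \<and> map F [a+i..<a+i+(c-m)] = map F [m..<c]}"
    then have "a + i \<le> m" "\<forall>j<c-m. F (a + i + j) = F (m + j)" using assms(1,2) match by auto
    then show "i \<in> {m - a}" using earlier[of "a + i"] by (cases "a + i < m") auto
  qed (use assms(1,2) match in auto)
  then show ?thesis unfolding occur_map_upt by simp
qed

section \<open>Grafting a left infinite word onto a prefix\<close>

definition graft :: "(nat \<Rightarrow> nat) \<Rightarrow> nat \<Rightarrow> (nat \<Rightarrow> nat) \<Rightarrow> nat \<Rightarrow> nat" where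
  "graft t m v i = (if i \<le> m then v i else t (i - Suc m))"

lemma lconc_eq_graft: "lconc t (rev (map v [0..<Suc m])) = graft t m v"
  by (auto simp: fun_eq_iff lconc_def graft_def simp del: upt_Suc)

lemma map_graft_after: "map (graft t m v) [Suc m..<Suc m + l] = map t [0..<l]"
  by (rule nth_equalityI) (simp_all add: graft_def del: upt_Suc)

text \<open>Reading \<open>v\<close> from the right, \<open>w\<^sub>1 = v[0, n)\<close>, \<open>w\<^sub>2 = v[n, m)\<close>, \<open>x = v m\<close>, and
  \<open>g = t[0, h)\<close> is spelled out by \<open>v\<close> just beyond \<open>m\<close>.  The last two conditions are the
  uniqueness of \<open>x g y\<close> in \<open>w\<^sub>2 x g y\<close> and the inequality between the numbers of \<open>x\<close>'s.\<close>
definition graft_point :: "(nat \<Rightarrow> nat) \<Rightarrow> (nat \<Rightarrow> nat) \<Rightarrow> nat \<Rightarrow> nat \<Rightarrow> nat \<Rightarrow> nat \<Rightarrow> bool" where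
  "graft_point v t x n m h \<longleftrightarrow> n \<le> m \<and> v m = x \<and> (\<forall>j<h. v (m + 1 + j) = t j) \<and>
     (\<forall>q. n \<le> q \<and> q < m \<and> v q = x \<longrightarrow> (\<exists>j\<le>h. v (q + 1 + j) \<noteq> t j)) \<and>
     card {q. q < n \<and> v q = x} \<le> card {q. n \<le> q \<and> q < m \<and> v q = x}"

context
  fixes k :: nat and \<alpha> :: rat and pl :: bool and v t :: "nat \<Rightarrow> nat" and x n m h :: nat
  assumes Ups: "Upsilon k \<alpha> pl"
    and v_Lang: "\<And>N. map v [0..<N] \<in> Lang k \<alpha> pl"
    and x_lt: "x < k"
    and t_pf: "linf_pf k \<alpha> pl t"
    and t_x: "\<And>i. t i \<noteq> x"
    and gp: "graft_point v t x n m h"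
begin

lemma v_lt: "v q < k"
  using letter_bound_if_Lang[OF v_Lang[of "Suc q"], of q] by simp

lemma t_lt: "t q < k"
proof -
  have "map t [q..<q + 1] \<in> Lang k \<alpha> pl" using t_pf unfolding linf_pf_iff by blast
  from letter_bound_if_Lang[OF this] show ?thesis by simp
qed

lemma v_after: "j < h \<Longrightarrow> v (m + 1 + j) = t j"
  using gp unfolding graft_point_def by blast

lemma v_before: "n \<le> q \<Longrightarrow> q < m \<Longrightarrow> v q = x \<Longrightarrow> \<exists>j\<le>h. v (q + 1 + j) \<noteq> t j"
  using gp unfolding graft_point_def by blast

lemma graft_eq_v: "i \<le> m + h \<Longrightarrow> graft t m v i = v i"
proof (cases "i \<le> m")
  case False
  assume "i \<le> m + h"
  then have "v i = t (i - Suc m)" using v_after[of "i - Suc m"] False by simp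
  then show ?thesis using False by (simp add: graft_def)
qed (simp add: graft_def)

lemma map_v_after: "map v [Suc m..<Suc m + h] = map t [0..<h]"
  by (rule nth_equalityI) (simp_all add: v_after[simplified] del: upt_Suc)

lemma map_v_through_m: "map v [0..<n] @ map v [n..<m] @ [x] = map v [0..<Suc m]"
  using gp upt_split[of 0 n m] by (simp add: graft_point_def)

lemma map_v_through_g: "map v [0..<n] @ map v [n..<m] @ [x] @ map t [0..<h] = map v [0..<m + 1 + h]"
  using map_v_through_m map_v_after upt_split[of 0 "Suc m" "m + 1 + h"] by simp

lemma graft_unique:
  assumes "n \<le> q" "q < m" "graft t m v q = x"
  shows "\<exists>j\<le>h. graft t m v (q + 1 + j) \<noteq> graft t m v (m + 1 + j)"
proof -
  obtain j where "j \<le> h" "v (q + 1 + j) \<noteq> t j"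
    using v_before[of q] assms by (auto simp: graft_def)
  moreover have "graft t m v (q + 1 + j) = v (q + 1 + j)"
    using \<open>j \<le> h\<close> \<open>q < m\<close> by (intro graft_eq_v) simp
  moreover have "graft t m v (m + 1 + j) = t j" by (simp add: graft_def)
  ultimately show ?thesis by metis
qed

lemma no_forbidden_power_in_graft: "\<not> forbidden_power_at \<alpha> pl (graft t m v) b L p"
proof (rule no_forbidden_power_across_cut[OF Ups, where m = m and h = h and n = n and x = x])
  show "\<not> forbidden_power_at \<alpha> pl (graft t m v) b L p" if "b + L \<le> m + h + 1" for b L p
  proof -
    have "forbidden_power_at \<alpha> pl (graft t m v) b L p \<longleftrightarrow> forbidden_power_at \<alpha> pl v b L p"
      using that by (intro forbidden_power_at_cong graft_eq_v) simp
    moreover have "power_free \<alpha> pl (map v [0..<0 + (m + h + 1)])"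
      using v_Lang[of "m + h + 1"] unfolding Lang_def by simp
    ultimately show ?thesis using no_forbidden_power_in_window[of \<alpha> pl v 0 "m + h + 1" b L p] that by simp
  qed
  show "\<not> forbidden_power_at \<alpha> pl (graft t m v) b L p" if "m < b" for b L p
  proof -
    have "forbidden_power_at \<alpha> pl (graft t m v) b L p \<longleftrightarrow> forbidden_power_at \<alpha> pl t (b - Suc m) L p"
      using that by (intro forbidden_power_at_cong) (simp add: graft_def)
    moreover have "power_free \<alpha> pl (map t [b - Suc m..<b - Suc m + L])"
      using t_pf by (simp add: linf_pf_iff Lang_def)
    ultimately show ?thesis using no_forbidden_power_in_window by blast
  qed
  show "graft t m v m = x" "n \<le> m" using gp by (simp_all add: graft_def graft_point_def)
  show "graft t m v q \<noteq> x" if "m < q" for q using that t_x by (simp add: graft_def)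
  show "\<exists>j\<le>h. graft t m v (q + 1 + j) \<noteq> graft t m v (m + 1 + j)"
    if "n \<le> q" "q < m" "graft t m v q = x" for q
    using graft_unique that .
  have "{q. q < n \<and> graft t m v q = x} = {q. q < n \<and> v q = x}"
    "{q. n \<le> q \<and> q < m \<and> graft t m v q = x} = {q. n \<le> q \<and> q < m \<and> v q = x}"
    using gp by (auto simp: graft_def graft_point_def)
  then show "card {q. q < n \<and> graft t m v q = x} \<le> card {q. n \<le> q \<and> q < m \<and> graft t m v q = x}"
    using gp by (simp add: graft_point_def)
qed

lemma graft_power_free: "linf_pf k \<alpha> pl (graft t m v)"
proof -
  have "word_over k (map (graft t m v) [i..<i + n])" for i n
    using v_lt t_lt by (auto simp: word_over_def graft_def)
  moreover have "power_free \<alpha> pl (map (graft t m v) [i..<i + n])" for i n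
    using no_forbidden_power_in_graft power_free_map_upt_iff by blast
  ultimately show ?thesis unfolding linf_pf_iff Lang_def by blast
qed

lemma xgy_occurs_once:
  "occur (map v [n..<m] @ [x] @ map t [0..<h] @ [t h]) ([x] @ map t [0..<h] @ [t h]) = 1"
proof -
  let ?F = "graft t m v"
  have "n \<le> m" "v m = x" using gp by (simp_all add: graft_point_def)
  have "[m..<m + h + 2] = m # [Suc m..<Suc m + Suc h]"
    using upt_conv_Cons[of m "Suc m + Suc h"] by (simp add: numeral_2_eq_2)
  then have "map ?F [m..<m + h + 2] = x # map t [0..<Suc h]"
    using map_graft_after[of t m v "Suc h"] \<open>v m = x\<close> by (simp add: graft_def del: upt_Suc)
  then have xgy: "[x] @ map t [0..<h] @ [t h] = map ?F [m..<m + h + 2]" by simp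
  have "map v [n..<m] = map ?F [n..<m]" by (simp add: graft_def)
  then have w2xgy: "map v [n..<m] @ map ?F [m..<m + h + 2] = map ?F [n..<m + h + 2]"
    using upt_split[of n m "m + h + 2"] \<open>n \<le> m\<close> by simp
  have "\<exists>j<m + h + 2 - m. ?F (q + j) \<noteq> ?F (m + j)" if q: "n \<le> q" "q < m" for q
  proof (cases "?F q = x")
    case True
    then obtain j where "j \<le> h" "?F (q + 1 + j) \<noteq> ?F (m + 1 + j)"
      using graft_unique[OF q True] by blast
    then show ?thesis by (intro exI[of _ "Suc j"]) simp
  next
    case False
    then show ?thesis using \<open>v m = x\<close> by (intro exI[of _ 0]) (simp add: graft_def)
  qed
  then have "occur (map ?F [n..<m + h + 2]) (map ?F [m..<m + h + 2]) = 1"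
    using \<open>n \<le> m\<close> by (intro occur_map_upt_suffix_once) simp_all
  then show ?thesis by (simp only: w2xgy xgy)
qed

lemma graft_point_Gamma:
  "(map v [0..<n], map v [n..<m], x, map t [0..<h], lrev t) \<in> Gamma k \<alpha> pl"
proof -
  have "occur (map v [0..<n]) [x] \<le> occur (map v [n..<m]) [x]"
    using gp by (simp add: occur_map_upt_letter graft_point_def)
  moreover have "map v [0..<n] @ map v [n..<m] @ [x] @ map t [0..<h] \<in> Lang k \<alpha> pl"
    unfolding map_v_through_g by (rule v_Lang)
  moreover have "rinf_pf k \<alpha> pl (lrev t)"
    using t_pf by (simp add: rinf_pf_def rfactor_def lrev_def linf_pf_iff)
  ultimately show ?thesis
    using xgy_occurs_once v_lt t_lt x_lt t_x
    by (simp add: Gamma_def word_over_def occ_pos_R_def rfactor_def lrev_def image_subset_iff)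
qed

lemma graft_point_witness:
  assumes "lfactor v 0 (length w) = w" "length w \<le> m + 1 + h"
  shows "\<exists>w1 w2 g. word_over k w1 \<and> word_over k w2 \<and> word_over k g \<and>
           (rev w1, rev w2, x, rev g, lrev t) \<in> Gamma k \<alpha> pl \<and>
           suffix w (g @ [x] @ w2 @ w1) \<and>
           linf_pf k \<alpha> pl (lconc t ([x] @ w2 @ w1))"
proof (intro exI conjI)
  let ?w1 = "rev (map v [0..<n])" and ?w2 = "rev (map v [n..<m])" and ?g = "rev (map t [0..<h])"
  show "word_over k ?w1" "word_over k ?w2" "word_over k ?g"
    using v_lt t_lt by (auto simp: word_over_def)
  show "(rev ?w1, rev ?w2, x, rev ?g, lrev t) \<in> Gamma k \<alpha> pl"
    using graft_point_Gamma by simp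
  have "?g @ [x] @ ?w2 @ ?w1 = rev (map v [0..<n] @ map v [n..<m] @ [x] @ map t [0..<h])"
    by simp
  also have "\<dots> = rev (map v [0..<m + 1 + h])" by (simp only: map_v_through_g)
  also have "\<dots> = rev (map v [length w..<m + 1 + h]) @ w"
    using assms upt_split[of 0 "length w" "m + 1 + h"] by (simp add: lfactor_def)
  finally show "suffix w (?g @ [x] @ ?w2 @ ?w1)" by (simp add: suffix_def)
  have "[x] @ ?w2 @ ?w1 = rev (map v [0..<n] @ map v [n..<m] @ [x])" by simp
  also have "\<dots> = rev (map v [0..<Suc m])" by (simp only: map_v_through_m)
  finally have "[x] @ ?w2 @ ?w1 = rev (map v [0..<Suc m])" .
  then show "linf_pf k \<alpha> pl (lconc t ([x] @ ?w2 @ ?w1))"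
    using graft_power_free by (simp add: lconc_eq_graft del: upt_Suc)
qed

end

section \<open>Choosing the graft point\<close>

definition occ_followed_by :: "(nat \<Rightarrow> nat) \<Rightarrow> nat \<Rightarrow> (nat \<Rightarrow> nat) \<Rightarrow> nat \<Rightarrow> nat set" where
  "occ_followed_by v x t h = {q. v q = x \<and> (\<forall>j<h. v (q + 1 + j) = t j)}"

lemma graft_point_if_finite_extension:
  assumes "infinite (occ_followed_by v x t h)" "finite (occ_followed_by v x t (Suc h))"
  shows "\<exists>n m. graft_point v t x n m h \<and> l \<le> m"
proof -
  obtain n where n: "occ_followed_by v x t (Suc h) \<subseteq> {..<n}"
    using assms(2) finite_nat_iff_bounded by blast
  have "infinite (occ_followed_by v x t h - {..<n + l})" using assms(1) by simp
  then obtain B where B: "finite B" "card B = Suc n" "B \<subseteq> occ_followed_by v x t h - {..<n + l}"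
    using infinite_arbitrarily_large by blast
  define m where "m = Max B"
  have "B \<noteq> {}" using B(2) by auto
  then have "m \<in> B" using B(1) by (simp add: m_def)
  then have "n + l \<le> m" "m \<in> occ_followed_by v x t h" using B(3) by auto
  have "B - {m} \<subseteq> {q. n \<le> q \<and> q < m \<and> v q = x}"
    using B(1,3) by (auto simp: m_def occ_followed_by_def dest: Max_ge[of B] simp del: Max_ge_iff)
  then have "n \<le> card {q. n \<le> q \<and> q < m \<and> v q = x}"
    using card_mono[of _ "B - {m}"] B \<open>m \<in> B\<close> by fastforce
  moreover have "card {q. q < n \<and> v q = x} \<le> n"
    using card_mono[of "{..<n}" "{q. q < n \<and> v q = x}"] by auto
  moreover have "\<exists>j\<le>h. v (q + 1 + j) \<noteq> t j" if "n \<le> q" "v q = x" for q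
  proof (rule ccontr)
    assume "\<not> (\<exists>j\<le>h. v (q + 1 + j) \<noteq> t j)"
    then have "q \<in> occ_followed_by v x t (Suc h)" using that by (auto simp: occ_followed_by_def)
    then show False using n that by auto
  qed
  ultimately have "graft_point v t x n m h"
    using \<open>n + l \<le> m\<close> \<open>m \<in> occ_followed_by v x t h\<close>
    by (auto simp: graft_point_def occ_followed_by_def)
  then show ?thesis using \<open>n + l \<le> m\<close> by (intro exI[of _ n] exI[of _ m]) simp
qed

lemma graft_point_if_all_extensions:
  assumes "occ_followed_by v x t l \<noteq> {}" "infinite (occ_followed_by v x t 0)"
    and t_x: "\<And>i. t i \<noteq> x"
  shows "\<exists>m h. graft_point v t x 0 m h \<and> l \<le> h"
proof -
  obtain m0 where "m0 \<in> occ_followed_by v x t l" using assms(1) by blast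
  obtain q' where "m0 < q'" "v q' = x"
    using assms(2) by (auto simp: infinite_nat_iff_unbounded occ_followed_by_def)
  define Hs where "Hs = {h. \<exists>q\<le>m0. q \<in> occ_followed_by v x t h}"
  have "Hs \<subseteq> {..q'}"
  proof
    fix h assume "h \<in> Hs"
    then obtain q where q: "q \<le> m0" "q \<in> occ_followed_by v x t h" unfolding Hs_def by blast
    have "\<not> q' - q - 1 < h"
    proof
      assume "q' - q - 1 < h"
      then have "v (q + 1 + (q' - q - 1)) = t (q' - q - 1)" using q(2) by (simp add: occ_followed_by_def)
      moreover have "q + 1 + (q' - q - 1) = q'" using q(1) \<open>m0 < q'\<close> by simp
      ultimately show False using \<open>v q' = x\<close> t_x by metis
    qed
    then show "h \<in> {..q'}" by simp
  qed
  then have "finite Hs" by (rule finite_subset) simp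
  define h where "h = Max Hs"
  have "l \<in> Hs" using \<open>m0 \<in> occ_followed_by v x t l\<close> by (auto simp: Hs_def)
  then have "h \<in> Hs" "l \<le> h" using \<open>finite Hs\<close> unfolding h_def by (auto intro: Max_in)
  then obtain m where "m \<le> m0" "m \<in> occ_followed_by v x t h" unfolding Hs_def by blast
  have "\<exists>j\<le>h. v (q + 1 + j) \<noteq> t j" if "q < m" "v q = x" for q
  proof (rule ccontr)
    assume "\<not> (\<exists>j\<le>h. v (q + 1 + j) \<noteq> t j)"
    then have "Suc h \<in> Hs"
      using that \<open>m \<le> m0\<close> by (auto simp: Hs_def occ_followed_by_def intro!: exI[of _ q])
    then show False using \<open>finite Hs\<close> h_def by (meson Max_ge not_less_eq_eq order_refl)
  qed
  then have "graft_point v t x 0 m h"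
    using \<open>m \<in> occ_followed_by v x t h\<close> by (auto simp: graft_point_def occ_followed_by_def)
  then show ?thesis using \<open>l \<le> h\<close> by blast
qed

lemma exists_graft_point:
  assumes "infinite {q. v q = x}" "\<And>i. t i \<noteq> x"
  shows "\<exists>n m h. graft_point v t x n m h \<and> l \<le> m + 1 + h"
proof (cases "\<exists>h. finite (occ_followed_by v x t h)")
  case True
  define h0 where "h0 = (LEAST h. finite (occ_followed_by v x t h))"
  have "finite (occ_followed_by v x t h0)"
    unfolding h0_def using True by (rule LeastI_ex)
  moreover have "occ_followed_by v x t 0 = {q. v q = x}" by (simp add: occ_followed_by_def)
  ultimately obtain h where "h0 = Suc h" using assms(1) by (cases h0) auto
  then have "infinite (occ_followed_by v x t h)" "finite (occ_followed_by v x t (Suc h))"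
    using not_less_Least[of h "\<lambda>h. finite (occ_followed_by v x t h)"] \<open>finite (occ_followed_by v x t h0)\<close>
    by (auto simp: h0_def)
  then show ?thesis using graft_point_if_finite_extension[where l = l] by fastforce
next
  case False
  then have "occ_followed_by v x t l \<noteq> {}" "infinite (occ_followed_by v x t 0)"
    using infinite_imp_nonempty by blast+
  then show ?thesis using graft_point_if_all_extensions[OF _ _ assms(2)] by fastforce
qed

theorem mainTheorem7:
  fixes k :: nat and \<alpha> :: rat and pl :: bool
    and w :: "nat list" and wbar :: "nat \<Rightarrow> nat" and x :: nat and t :: "nat \<Rightarrow> nat"
  assumes "Upsilon k \<alpha> pl"
    and "w \<in> lext (Lang k \<alpha> pl)"
    and "wbar \<in> lext_w w (Lang k \<alpha> pl)"
    and "x < k"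
    and "infinite (occ_pos_L wbar [x])"
    and "linf_pf k \<alpha> pl t"
    and "occ_pos_L t [x] = {}"
  shows "\<exists>w1 w2 g. word_over k w1 \<and> word_over k w2 \<and> word_over k g \<and>
           (rev w1, rev w2, x, rev g, lrev t) \<in> Gamma k \<alpha> pl \<and>
           suffix w (g @ [x] @ w2 @ w1) \<and>
           linf_pf k \<alpha> pl (lconc t ([x] @ w2 @ w1))"
proof -
  have wbar_Lang: "map wbar [0..<N] \<in> Lang k \<alpha> pl" for N
    using assms(3) unfolding lext_w_def by (auto simp: lfactor_in_Lang_iff)
  have t_x: "t i \<noteq> x" for i
    using assms(7) by (auto simp: occ_pos_L_def lfactor_def)
  have "infinite {q. wbar q = x}"
    using assms(5) by (simp add: occ_pos_L_def lfactor_def)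
  then obtain n m h where "graft_point wbar t x n m h" "length w \<le> m + 1 + h"
    using exists_graft_point t_x by blast
  then show ?thesis
    using graft_point_witness[OF assms(1) wbar_Lang assms(4,6) t_x] assms(3)
    by (simp add: lext_w_def)
qed

end
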